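(* Let $n,p,q\in\mathbb{N}_{>0}$ with $p>q$, let $\mathcal W:\mathbb{R}^q\to\mathbb{R}^p$ be a mapping, let $\eta\in\mathbb{R}^q$ be a constant vector, and let $(y(k))_{k\in\mathbb{N}_{\ge0}}\subset\mathbb{R}^n$, $(\Omega(k))_{k\in\mathbb{N}_{\ge0}}\subset\mathbb{R}^{n\times p}$ be sequences satisfying $y(k)=\Omega(k)\mathcal W(\eta)$ for all $k\ge0$. Let $T\in\mathbb{R}^{p\times p}$ be a permutation matrix, $C:=\begin{bmatrix} I_q & | & 0_{q\times(p-q)}\end{bmatrix}T$ and $\mathcal G(\eta):=C\mathcal W(\eta)$. Fix $0<\alpha<1$ and define, for $k\ge1$, $$Y(k)=-\alpha Y(k-1)+\Omega^\top(k-1)y(k-1),\qquad \Phi(k)=-\alpha\Phi(k-1)+\Omega^\top(k-1)\Omega(k-1),$$ with $Y(0)=0\in\mathbb{R}^p$, $\Phi(0)=0\in\mathbb{R}^{p\times p}$, and set $\mathcal Y(k):=C\,\mathrm{adj}\{\Phi(k)\}Y(k)$, $\Delta(k):=\det\{\Phi(k)\}$. Then $$\mathcal Y_i(k)=\Delta(k)\mathcal G_i(\eta),\quad i=1,\dots,q,$$ i.e. $\mathcal Y(k)=\Delta(k)\mathcal G(\eta)$, for all $k\ge0$.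
   Context: $\mathrm{adj}\{A\}$ denotes the adjugate matrix of a square matrix $A$, satisfying $\mathrm{adj}\{A\}A=\det\{A\}I$. *)

theory Defs
  imports "Jordan_Normal_Form.Determinant"
begin

definition perm_matrix :: "nat \<Rightarrow> real mat \<Rightarrow> bool" where
  "perm_matrix p T \<longleftrightarrow>
     (\<exists>\<sigma>. \<sigma> permutes {..<p} \<and> T = mat p p (\<lambda>(i,j). if \<sigma> i = j then 1 else 0))"

definition sel_block :: "nat \<Rightarrow> nat \<Rightarrow> real mat" where
  "sel_block q p = mat q p (\<lambda>(i,j). if i = j then 1 else 0)"

primrec Yf :: "nat \<Rightarrow> real \<Rightarrow> (nat \<Rightarrow> real mat) \<Rightarrow> (nat \<Rightarrow> real vec) \<Rightarrow> nat \<Rightarrow> real vec" where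
  "Yf p \<alpha> \<Omega> y 0 = 0\<^sub>v p"
| "Yf p \<alpha> \<Omega> y (Suc k) = (- \<alpha>) \<cdot>\<^sub>v Yf p \<alpha> \<Omega> y k + transpose_mat (\<Omega> k) *\<^sub>v y k"

primrec Phif :: "nat \<Rightarrow> real \<Rightarrow> (nat \<Rightarrow> real mat) \<Rightarrow> nat \<Rightarrow> real mat" where
  "Phif p \<alpha> \<Omega> 0 = 0\<^sub>m p p"
| "Phif p \<alpha> \<Omega> (Suc k) = (- \<alpha>) \<cdot>\<^sub>m Phif p \<alpha> \<Omega> k + transpose_mat (\<Omega> k) * \<Omega> k"

end

theory Submission
  imports Defs
begin

text \<open>Since \<open>y(k) = \<Omega>(k) w\<close> with \<open>w = \<W>(\<eta>)\<close>, the filters \<open>Y\<close> and \<open>\<Phi> w\<close> obey the same linear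
  recursion from the same initial value, so \<open>Y(k) = \<Phi>(k) w\<close>. Multiplying by the adjugate
  gives \<open>adj{\<Phi>(k)} Y(k) = det{\<Phi>(k)} w\<close>, and applying the linear map \<open>C\<close> finishes the proof.\<close>

lemma perm_matrix_carrier: "perm_matrix p T \<Longrightarrow> T \<in> carrier_mat p p"
  unfolding perm_matrix_def by auto

lemma sel_block_carrier: "sel_block q p \<in> carrier_mat q p"
  unfolding sel_block_def by simp

lemma Phif_carrier:
  assumes "\<And>k. \<Omega> k \<in> carrier_mat (m k) p"
  shows "Phif p \<alpha> \<Omega> k \<in> carrier_mat p p"
proof (induction k)
  case (Suc k)
  have "transpose_mat (\<Omega> k) * \<Omega> k \<in> carrier_mat p p"
    using assms[of k] by auto
  with Suc show ?case by simp
qed simp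

lemma Yf_eq_Phif_mult_vec:
  assumes \<Omega>: "\<And>k. \<Omega> k \<in> carrier_mat (m k) p"
    and w: "w \<in> carrier_vec p"
    and regr: "\<And>k. y k = \<Omega> k *\<^sub>v w"
  shows "Yf p \<alpha> \<Omega> y k = Phif p \<alpha> \<Omega> k *\<^sub>v w"
proof (induction k)
  case 0
  then show ?case using w by auto
next
  case (Suc k)
  have \<Phi>: "Phif p \<alpha> \<Omega> k \<in> carrier_mat p p"
    using \<Omega> by (rule Phif_carrier)
  have "Phif p \<alpha> \<Omega> (Suc k) *\<^sub>v w
      = ((- \<alpha>) \<cdot>\<^sub>m Phif p \<alpha> \<Omega> k) *\<^sub>v w + (transpose_mat (\<Omega> k) * \<Omega> k) *\<^sub>v w"
    using \<Phi> \<Omega>[of k] w by (simp add: add_mult_distrib_mat_vec[of _ p p])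
  also have "\<dots> = (- \<alpha>) \<cdot>\<^sub>v (Phif p \<alpha> \<Omega> k *\<^sub>v w) + transpose_mat (\<Omega> k) *\<^sub>v y k"
    using \<Phi> \<Omega>[of k] w regr by auto
  finally show ?case using Suc by simp
qed

lemma adj_mat_mult_vec_cancel:
  assumes A: "A \<in> carrier_mat n n" and w: "w \<in> carrier_vec n"
  shows "adj_mat A *\<^sub>v (A *\<^sub>v w) = det A \<cdot>\<^sub>v w"
proof -
  have adj: "adj_mat A \<in> carrier_mat n n" "adj_mat A * A = det A \<cdot>\<^sub>m 1\<^sub>m n"
    using adj_mat[OF A] by auto
  have "adj_mat A *\<^sub>v (A *\<^sub>v w) = (adj_mat A * A) *\<^sub>v w"
    using adj(1) A w by (simp add: assoc_mult_mat_vec)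
  also have "\<dots> = det A \<cdot>\<^sub>v w"
    using adj(2) w by auto
  finally show ?thesis .
qed

theorem proposition2:
  fixes n p q :: nat
    and W :: "real vec \<Rightarrow> real vec"
    and \<eta> :: "real vec"
    and y :: "nat \<Rightarrow> real vec"
    and \<Omega> :: "nat \<Rightarrow> real mat"
    and T :: "real mat"
    and \<alpha> :: real
  assumes "n > 0" and "p > 0" and "q > 0" and "p > q"
    and W_dim: "\<forall>x \<in> carrier_vec q. W x \<in> carrier_vec p"
    and eta: "\<eta> \<in> carrier_vec q"
    and y_dim: "\<forall>k. y k \<in> carrier_vec n"
    and Omega_dim: "\<forall>k. \<Omega> k \<in> carrier_mat n p"
    and regr: "\<forall>k. y k = \<Omega> k *\<^sub>v W \<eta>"
    and T: "perm_matrix p T"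
    and "0 < \<alpha>" and "\<alpha> < 1"
  shows "\<forall>k. sel_block q p * T *\<^sub>v (adj_mat (Phif p \<alpha> \<Omega> k) *\<^sub>v Yf p \<alpha> \<Omega> y k)
             = det (Phif p \<alpha> \<Omega> k) \<cdot>\<^sub>v (sel_block q p * T *\<^sub>v W \<eta>)"
proof
  fix k
  have \<Omega>: "\<And>k. \<Omega> k \<in> carrier_mat n p" using Omega_dim by blast
  have w: "W \<eta> \<in> carrier_vec p" using W_dim eta by blast
  have \<Phi>: "Phif p \<alpha> \<Omega> k \<in> carrier_mat p p" using \<Omega> by (rule Phif_carrier)
  have C: "sel_block q p * T \<in> carrier_mat q p"
    using sel_block_carrier perm_matrix_carrier[OF T] by (rule mult_carrier_mat)
  have "adj_mat (Phif p \<alpha> \<Omega> k) *\<^sub>v Yf p \<alpha> \<Omega> y k = det (Phif p \<alpha> \<Omega> k) \<cdot>\<^sub>v W \<eta>"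
    using Yf_eq_Phif_mult_vec[OF \<Omega> w] regr adj_mat_mult_vec_cancel[OF \<Phi> w] by simp
  then show "sel_block q p * T *\<^sub>v (adj_mat (Phif p \<alpha> \<Omega> k) *\<^sub>v Yf p \<alpha> \<Omega> y k)
             = det (Phif p \<alpha> \<Omega> k) \<cdot>\<^sub>v (sel_block q p * T *\<^sub>v W \<eta>)"
    using mult_mat_vec[OF C w] by simp
qed

end
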